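(* For every $\alpha \in (1/3, 1/2)$ there exists $\beta>0$ such that the following holds for all sufficiently large $n$: every $n$-vertex graph $G$ with at least $\lfloor n^2/4\rfloor+1$ edges and $b(G)<\alpha n/2$ has at least $\beta n^3$ triangles.
   Context: Graphs are finite and simple. A book of size $b$ in a graph is an edge that lies in $b$ triangles; $b(G)$ denotes the maximum size of a book in $G$, i.e. the maximum, over all edges $e$ of $G$, of the number of triangles of $G$ containing $e$. *)

theory Defs
  imports Complex_Main
begin

definition simple_graph :: "'a set \<Rightarrow> 'a set set \<Rightarrow> bool" where
  "simple_graph V E \<longleftrightarrow> finite V \<and> (\<forall>e\<in>E. e \<subseteq> V \<and> card e = 2)"

definition triangles :: "'a set \<Rightarrow> 'a set set \<Rightarrow> 'a set set" where
  "triangles V E = {T. T \<subseteq> V \<and> card T = 3 \<and> (\<forall>x\<in>T. \<forall>y\<in>T. x \<noteq> y \<longrightarrow> {x, y} \<in> E)}"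

definition book_size :: "'a set \<Rightarrow> 'a set set \<Rightarrow> 'a set \<Rightarrow> nat" where
  "book_size V E e = card {T \<in> triangles V E. e \<subseteq> T}"

definition max_book :: "'a set \<Rightarrow> 'a set set \<Rightarrow> nat" where
  "max_book V E = (if E = {} then 0 else Max (book_size V E ` E))"

end

theory Submission
  imports Defs
begin

text \<open>Let every book have fewer than c n pages, c < 1/4, and suppose G has more than n^2/4
  edges but few triangles. As the degrees average more than n/2, averaging over x shows that
  the cut between a neighbourhood N(x) and its complement has nearly n^2/4 edges; hence a
  maximum cut (A, V - A) is nearly complete bipartite and nearly balanced. Call a vertex heavy
  if it misses more than \<eta> n/2 edges across the cut. Two adjacent vertices on the same side
  would have nearly n/2 common neighbours across unless one of them is heavy, so every edge
  inside a side has a heavy end; and a heavy vertex misses at least as many cross edges as it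
  has inner neighbours plus heavy vertices in total. Charging each edge inside a side to a
  heavy end, these edges are at most as many as the missing cross edges, so G has at most
  |A| |V - A| \<le> n^2/4 edges.\<close>

definition crosses :: "'a set \<Rightarrow> 'a \<Rightarrow> 'a \<Rightarrow> real" where
  "crosses A u w = (if (u \<in> A) = (w \<in> A) then 0 else 1)"

lemma crosses_commute: "crosses A u w = crosses A w u"
  by (auto simp: crosses_def)

lemma crosses_cases: "crosses A u w = 0 \<or> crosses A u w = 1"
  by (auto simp: crosses_def)

lemma crosses_nonneg [simp]: "0 \<le> crosses A u w"
  by (simp add: crosses_def)

locale finite_graph =
  fixes V :: "'a set" and E :: "'a set set"
  assumes simple: "simple_graph V E"
begin

definition adj :: "'a \<Rightarrow> 'a \<Rightarrow> real" where
  "adj u v = (if {u, v} \<in> E then 1 else 0)"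

definition degree :: "'a \<Rightarrow> real" where
  "degree u = (\<Sum>w\<in>V. adj u w)"

definition codegree :: "'a \<Rightarrow> 'a \<Rightarrow> real" where
  "codegree u v = (\<Sum>w\<in>V. adj u w * adj v w)"

definition nbhd :: "'a \<Rightarrow> 'a set" where
  "nbhd x = {y \<in> V. adj x y = 1}"

definition ordered_triangles :: real where
  "ordered_triangles = (\<Sum>x\<in>V. \<Sum>u\<in>V. \<Sum>w\<in>V. adj x u * adj u w * adj x w)"

text \<open>Every edge across the cut is counted twice.\<close>
definition cut_weight :: "'a set \<Rightarrow> real" where
  "cut_weight A = (\<Sum>u\<in>V. \<Sum>w\<in>V. crosses A u w * adj u w)"

lemma finite_V: "finite V"
  using simple by (simp add: simple_graph_def)

lemma edge_vertices:
  assumes "{u, v} \<in> E" shows "u \<in> V" "v \<in> V" "u \<noteq> v"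
proof -
  have "{u, v} \<subseteq> V" "card {u, v} = 2"
    using simple assms by (auto simp: simple_graph_def)
  then show "u \<in> V" "v \<in> V" "u \<noteq> v" by auto
qed

lemma finite_E: "finite E"
proof -
  have "E \<subseteq> Pow V" using simple by (auto simp: simple_graph_def)
  then show ?thesis using finite_subset finite_V by auto
qed

lemma adj_commute: "adj u v = adj v u"
  by (simp add: adj_def insert_commute)

lemma adj_cases: "adj u v = 0 \<or> adj u v = 1"
  by (simp add: adj_def)

lemma codegree_commute: "codegree u v = codegree v u"
  by (simp add: codegree_def mult.commute)

lemma adj_self [simp]: "adj v v = 0"
  using edge_vertices(3)[of v v] by (auto simp: adj_def)

lemma adj_eq_1_iff: "adj u v = 1 \<longleftrightarrow> {u, v} \<in> E"
  by (simp add: adj_def)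

lemma twice_card_edges_le_degree_sum: "2 * real (card E) \<le> (\<Sum>u\<in>V. degree u)"
proof -
  let ?ends = "\<lambda>e. \<Sum>u\<in>V. \<Sum>w\<in>V. if e = {u, w} then 1 else (0::real)"
  have "2 \<le> ?ends e" if "e \<in> E" for e
  proof -
    have "card e = 2" using simple that by (simp add: simple_graph_def)
    then obtain p q where pq: "e = {p, q}" "p \<noteq> q" by (auto simp: card_2_iff)
    then have pqV: "p \<in> V" "q \<in> V" using edge_vertices that by auto
    let ?g = "\<lambda>u. \<Sum>w\<in>V. if e = {u, w} then 1 else (0::real)"
    have "1 \<le> ?g p" "1 \<le> ?g q"
      using member_le_sum[of q V "\<lambda>w. if e = {p, w} then 1 else (0::real)"]
        member_le_sum[of p V "\<lambda>w. if e = {q, w} then 1 else (0::real)"] pqV pq finite_V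
      by (auto simp: insert_commute)
    moreover have "?g p + ?g q \<le> sum ?g V"
      using pq pqV finite_V sum_mono2[of V "{p, q}" ?g] by (simp add: sum_nonneg)
    ultimately show ?thesis by simp
  qed
  then have "2 * real (card E) \<le> (\<Sum>e\<in>E. ?ends e)"
    using sum_mono[of E "\<lambda>_. 2" ?ends] by simp
  also have "\<dots> = (\<Sum>u\<in>V. \<Sum>w\<in>V. \<Sum>e\<in>E. if e = {u, w} then 1 else (0::real))"
    by (simp add: sum.swap[of _ E] sum.swap[of _ E V])
  also have "\<dots> = (\<Sum>u\<in>V. degree u)"
    by (simp add: degree_def adj_def sum.delta[OF finite_E])
  finally show ?thesis .
qed

lemma finite_triangles: "finite (triangles V E)"
proof -
  have "triangles V E \<subseteq> Pow V" by (auto simp: triangles_def)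
  then show ?thesis using finite_subset finite_V by auto
qed

lemma triangle_of_adj:
  assumes "adj x u = 1" "adj u w = 1" "adj x w = 1"
  shows "{x, u, w} \<in> triangles V E"
proof -
  have e: "{x, u} \<in> E" "{u, w} \<in> E" "{x, w} \<in> E"
    using assms by (auto simp: adj_eq_1_iff)
  note d = edge_vertices[OF e(1)] edge_vertices[OF e(2)] edge_vertices[OF e(3)]
  then have "card {x, u, w} = 3" by auto
  then show ?thesis
    unfolding triangles_def using d e by (auto simp: insert_commute)
qed

text \<open>The exact factor is 6, but 27 suffices.\<close>
lemma ordered_triangles_le: "ordered_triangles \<le> 27 * real (card (triangles V E))"
proof -
  let ?I = "\<lambda>T y. if y \<in> T then 1 else (0::real)"
  have covered: "adj x u * adj u w * adj x w \<le> (\<Sum>T\<in>triangles V E. ?I T x * ?I T u * ?I T w)"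
    for x u w
  proof (cases "adj x u = 1 \<and> adj u w = 1 \<and> adj x w = 1")
    case True
    then have "{x, u, w} \<in> triangles V E" using triangle_of_adj by auto
    then have "?I {x, u, w} x * ?I {x, u, w} u * ?I {x, u, w} w
        \<le> (\<Sum>T\<in>triangles V E. ?I T x * ?I T u * ?I T w)"
      by (intro member_le_sum finite_triangles) auto
    then show ?thesis using True by simp
  next
    case False
    then have "adj x u * adj u w * adj x w = 0"
      using adj_cases[of x u] adj_cases[of u w] adj_cases[of x w] by auto
    moreover have "0 \<le> (\<Sum>T\<in>triangles V E. ?I T x * ?I T u * ?I T w)"
      by (intro sum_nonneg) auto
    ultimately show ?thesis by linarith
  qed
  have per_triangle: "(\<Sum>x\<in>V. \<Sum>u\<in>V. \<Sum>w\<in>V. ?I T x * ?I T u * ?I T w) = 27"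
    if "T \<in> triangles V E" for T
  proof -
    have "T \<subseteq> V" "card T = 3" using that by (auto simp: triangles_def)
    then have three: "(\<Sum>x\<in>V. ?I T x) = 3"
      using finite_V by (simp add: sum.If_cases Int_absorb1)
    then show ?thesis
      by (simp only: sum_distrib_left[symmetric] sum_distrib_right[symmetric])
  qed
  have "ordered_triangles \<le> (\<Sum>x\<in>V. \<Sum>u\<in>V. \<Sum>w\<in>V. \<Sum>T\<in>triangles V E. ?I T x * ?I T u * ?I T w)"
    unfolding ordered_triangles_def by (intro sum_mono covered)
  also have "\<dots> = (\<Sum>T\<in>triangles V E. \<Sum>x\<in>V. \<Sum>u\<in>V. \<Sum>w\<in>V. ?I T x * ?I T u * ?I T w)"
    by (simp add: sum.swap[of _ "triangles V E"])
  also have "\<dots> = 27 * real (card (triangles V E))"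
    by (simp add: per_triangle)
  finally show ?thesis .
qed

lemma codegree_le_max_book:
  assumes "{u, v} \<in> E"
  shows "codegree u v \<le> real (max_book V E)"
proof -
  let ?C = "{w \<in> V. {u, w} \<in> E \<and> {v, w} \<in> E}"
  have "codegree u v = (\<Sum>w\<in>V. if {u, w} \<in> E \<and> {v, w} \<in> E then 1 else 0)"
    unfolding codegree_def by (intro sum.cong) (auto simp: adj_def)
  also have "\<dots> = real (card ?C)"
    using finite_V by (simp add: sum.If_cases Int_def)
  also have "card ?C \<le> card {T \<in> triangles V E. {u, v} \<subseteq> T}"
  proof (rule card_inj_on_le[where f = "\<lambda>w. {u, v, w}"])
    show "inj_on (\<lambda>w. {u, v, w}) ?C"
    proof (rule inj_onI)
      fix w w' assume "w \<in> ?C" "w' \<in> ?C" and eq: "{u, v, w} = {u, v, w'}"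
      then have "w \<noteq> u" "w \<noteq> v" "w' \<noteq> u" "w' \<noteq> v" using edge_vertices(3) by blast+
      then show "w = w'" using eq by blast
    qed
    show "(\<lambda>w. {u, v, w}) ` ?C \<subseteq> {T \<in> triangles V E. {u, v} \<subseteq> T}"
      using assms triangle_of_adj by (auto simp: adj_eq_1_iff)
  qed (use finite_triangles in simp)
  also have "\<dots> = book_size V E {u, v}"
    by (simp add: book_size_def)
  also have "\<dots> \<le> max_book V E"
    using assms finite_E by (auto simp: max_book_def)
  finally show ?thesis by simp
qed

text \<open>In a pair (u, w) an edge of G crosses the cut at N(x) exactly when one of u, w is a
  neighbour of x and xuw is not a triangle; summing over x turns this into squared degrees.\<close>
lemma sum_cut_weight_nbhd:
  "(\<Sum>x\<in>V. cut_weight (nbhd x)) = 2 * (\<Sum>u\<in>V. degree u ^ 2) - 2 * ordered_triangles"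
proof -
  have pointwise: "crosses (nbhd x) u w * adj u w
      = adj x u * adj u w + adj x w * adj u w - 2 * (adj x u * adj u w * adj x w)"
    if "u \<in> V" "w \<in> V" for x u w
    using that adj_cases[of x u] adj_cases[of x w] adj_cases[of u w]
    by (auto simp: crosses_def nbhd_def)
  have paths: "(\<Sum>x\<in>V. \<Sum>u\<in>V. \<Sum>w\<in>V. adj x u * adj u w) = (\<Sum>u\<in>V. degree u ^ 2)"
  proof -
    have "(\<Sum>x\<in>V. \<Sum>u\<in>V. \<Sum>w\<in>V. adj x u * adj u w) = (\<Sum>u\<in>V. \<Sum>x\<in>V. adj x u * degree u)"
      by (subst sum.swap) (simp add: degree_def sum_distrib_left)
    also have "\<dots> = (\<Sum>u\<in>V. degree u ^ 2)"
      by (simp add: degree_def sum_distrib_right adj_commute power2_eq_square)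
    finally show ?thesis .
  qed
  have paths': "(\<Sum>x\<in>V. \<Sum>u\<in>V. \<Sum>w\<in>V. adj x w * adj u w) = (\<Sum>u\<in>V. degree u ^ 2)"
  proof -
    have "(\<Sum>x\<in>V. \<Sum>u\<in>V. \<Sum>w\<in>V. adj x w * adj u w) = (\<Sum>x\<in>V. \<Sum>w\<in>V. \<Sum>u\<in>V. adj x w * adj u w)"
      by (rule sum.cong[OF refl], rule sum.swap)
    also have "\<dots> = (\<Sum>w\<in>V. \<Sum>x\<in>V. adj x w * degree w)"
      by (subst sum.swap) (simp add: degree_def sum_distrib_left adj_commute)
    also have "\<dots> = (\<Sum>u\<in>V. degree u ^ 2)"
      by (simp add: degree_def sum_distrib_right adj_commute power2_eq_square)
    finally show ?thesis .
  qed
  have "(\<Sum>x\<in>V. cut_weight (nbhd x)) = (\<Sum>x\<in>V. \<Sum>u\<in>V. \<Sum>w\<in>V.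
      adj x u * adj u w + adj x w * adj u w - 2 * (adj x u * adj u w * adj x w))"
    unfolding cut_weight_def by (intro sum.cong refl) (simp add: pointwise)
  also have "\<dots> = (\<Sum>x\<in>V. \<Sum>u\<in>V. \<Sum>w\<in>V. adj x u * adj u w)
      + (\<Sum>x\<in>V. \<Sum>u\<in>V. \<Sum>w\<in>V. adj x w * adj u w) - 2 * ordered_triangles"
    by (simp add: ordered_triangles_def sum.distrib sum_subtractf sum_distrib_left)
  finally show ?thesis by (simp add: paths paths')
qed

lemma ex_nbhd_large_cut:
  assumes "card V = n" "0 < n" and dense: "real n ^ 2 / 2 \<le> (\<Sum>u\<in>V. degree u)"
  shows "\<exists>x\<in>V. real n ^ 2 / 2 - 2 * ordered_triangles / real n \<le> cut_weight (nbhd x)"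
proof (rule ccontr)
  assume "\<not> ?thesis"
  then have "(\<Sum>x\<in>V. cut_weight (nbhd x)) < (\<Sum>x\<in>V. real n ^ 2 / 2 - 2 * ordered_triangles / real n)"
    using assms finite_V by (intro sum_strict_mono) auto
  also have "\<dots> = real n ^ 3 / 2 - 2 * ordered_triangles"
    using assms by (simp add: field_simps power3_eq_cube power2_eq_square)
  finally have "(\<Sum>u\<in>V. degree u ^ 2) < real n ^ 3 / 4"
    by (simp add: sum_cut_weight_nbhd)
  moreover have "0 \<le> (\<Sum>u\<in>V. (degree u - real n / 2) ^ 2)"
    by (intro sum_nonneg) auto
  moreover have "(\<Sum>u\<in>V. (degree u - real n / 2) ^ 2)
      = (\<Sum>u\<in>V. degree u ^ 2) - real n * (\<Sum>u\<in>V. degree u) + real n ^ 3 / 4"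
    using assms by (simp add: power2_eq_square algebra_simps sum.distrib sum_subtractf
        sum_distrib_left[symmetric] power3_eq_cube)
  moreover have "real n * (real n ^ 2 / 2) \<le> real n * (\<Sum>u\<in>V. degree u)"
    using dense by (intro mult_left_mono) auto
  ultimately show False
    by (simp add: power3_eq_cube power2_eq_square)
qed

lemma ex_max_cut: "\<exists>A\<subseteq>V. \<forall>A'\<subseteq>V. cut_weight A' \<le> cut_weight A"
proof -
  have "finite (cut_weight ` Pow V)" using finite_V by simp
  moreover have "cut_weight ` Pow V \<noteq> {}" by blast
  ultimately obtain A where "A \<in> Pow V" "cut_weight A = Max (cut_weight ` Pow V)"
    using Max_in by (metis imageE)
  then show ?thesis using \<open>finite (cut_weight ` Pow V)\<close> by auto
qed

lemma ex_large_max_cut: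
  assumes "card V = n" "0 < n" and dense: "real n ^ 2 / 2 \<le> (\<Sum>u\<in>V. degree u)"
    and few_triangles: "ordered_triangles < \<mu> * real n ^ 3"
  shows "\<exists>A\<subseteq>V. (\<forall>A'\<subseteq>V. cut_weight A' \<le> cut_weight A)
    \<and> real n ^ 2 / 2 - 2 * \<mu> * real n ^ 2 < cut_weight A"
proof -
  obtain x where x: "real n ^ 2 / 2 - 2 * ordered_triangles / real n \<le> cut_weight (nbhd x)"
    using ex_nbhd_large_cut[OF assms(1-3)] by blast
  obtain A where A: "A \<subseteq> V" "\<forall>A'\<subseteq>V. cut_weight A' \<le> cut_weight A"
    using ex_max_cut by blast
  have "2 * ordered_triangles / real n < 2 * \<mu> * real n ^ 2"
    using few_triangles assms(2) by (simp add: field_simps power3_eq_cube power2_eq_square)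
  moreover have "cut_weight (nbhd x) \<le> cut_weight A" using A(2) by (auto simp: nbhd_def)
  ultimately have "real n ^ 2 / 2 - 2 * \<mu> * real n ^ 2 < cut_weight A" using x by linarith
  then show ?thesis using A by blast
qed

end

locale max_cut = finite_graph +
  fixes A :: "'a set"
  assumes cut_subset: "A \<subseteq> V"
    and cut_max: "\<And>A'. A' \<subseteq> V \<Longrightarrow> cut_weight A' \<le> cut_weight A"
begin

definition inner_degree :: "'a \<Rightarrow> real" where
  "inner_degree v = (\<Sum>w\<in>V. (1 - crosses A v w) * adj v w)"

definition cross_degree :: "'a \<Rightarrow> real" where
  "cross_degree v = (\<Sum>w\<in>V. crosses A v w * adj v w)"

definition opposite_size :: "'a \<Rightarrow> real" where
  "opposite_size v = (\<Sum>w\<in>V. crosses A v w)"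

definition cross_missing :: "'a \<Rightarrow> real" where
  "cross_missing v = (\<Sum>w\<in>V. crosses A v w * (1 - adj v w))"

lemma cross_missing_eq: "cross_missing v = opposite_size v - cross_degree v"
  by (simp add: cross_missing_def opposite_size_def cross_degree_def algebra_simps sum_subtractf)

lemma cross_missing_nonneg: "0 \<le> cross_missing v"
  unfolding cross_missing_def by (intro sum_nonneg) (auto simp: adj_def)

lemma sum_cross_degree: "(\<Sum>v\<in>V. cross_degree v) = cut_weight A"
  by (simp add: cross_degree_def cut_weight_def)

lemma sum_inner_degree: "(\<Sum>v\<in>V. inner_degree v) = (\<Sum>v\<in>V. degree v) - cut_weight A"
  by (simp add: inner_degree_def degree_def cut_weight_def algebra_simps sum_subtractf sum.distrib)

text \<open>Moving v to the other side changes the cut weight by twice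
  inner_degree v - cross_degree v.\<close>
lemma inner_degree_le_cross_degree:
  assumes "v \<in> V" shows "inner_degree v \<le> cross_degree v"
proof -
  define A' where "A' = (if v \<in> A then A - {v} else insert v A)"
  have A'V: "A' \<subseteq> V" using cut_subset assms by (auto simp: A'_def)
  have flip: "crosses A' u w * adj u w = crosses A u w * adj u w
      + (if u = v then (1 - 2 * crosses A v w) * adj v w else 0)
      + (if w = v then (1 - 2 * crosses A u v) * adj u v else 0)" for u w
    by (cases "u = v"; cases "w = v") (auto simp: crosses_def A'_def)
  have "(\<Sum>u\<in>V. \<Sum>w\<in>V. if u = v then (1 - 2 * crosses A v w) * adj v w else 0)
      = (\<Sum>u\<in>V. if u = v then (\<Sum>w\<in>V. (1 - 2 * crosses A v w) * adj v w) else 0)"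
    by (intro sum.cong) auto
  then have shift:
    "(\<Sum>u\<in>V. \<Sum>w\<in>V. if u = v then (1 - 2 * crosses A v w) * adj v w else 0)
      + (\<Sum>u\<in>V. \<Sum>w\<in>V. if w = v then (1 - 2 * crosses A u v) * adj u v else 0)
      = 2 * (\<Sum>w\<in>V. (1 - 2 * crosses A v w) * adj v w)"
    using assms finite_V by (simp add: sum.delta' crosses_commute adj_commute)
  have "cut_weight A' = cut_weight A
      + ((\<Sum>u\<in>V. \<Sum>w\<in>V. if u = v then (1 - 2 * crosses A v w) * adj v w else 0)
      + (\<Sum>u\<in>V. \<Sum>w\<in>V. if w = v then (1 - 2 * crosses A u v) * adj u v else 0))"
    unfolding cut_weight_def flip by (simp only: sum.distrib add.assoc)
  also have "\<dots> = cut_weight A + 2 * (\<Sum>w\<in>V. (1 - 2 * crosses A v w) * adj v w)"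
    by (simp only: shift)
  also have "(\<Sum>w\<in>V. (1 - 2 * crosses A v w) * adj v w) = inner_degree v - cross_degree v"
    by (simp add: inner_degree_def cross_degree_def algebra_simps sum_subtractf sum.distrib
        sum_distrib_left)
  finally show ?thesis using cut_max[OF A'V] by simp
qed

lemma card_sides: "real (card A) + real (card (V - A)) = real (card V)"
  using cut_subset finite_V
  by (metis card_Diff_subset finite_subset card_mono of_nat_add le_add_diff_inverse)

lemma opposite_size_eq: "opposite_size v = (if v \<in> A then real (card (V - A)) else real (card A))"
proof -
  have "opposite_size v = (\<Sum>w\<in>V. if (w \<in> A) \<noteq> (v \<in> A) then 1 else 0)"
    unfolding opposite_size_def crosses_def by (intro sum.cong) auto
  also have "\<dots> = real (card {w\<in>V. (w \<in> A) \<noteq> (v \<in> A)})"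
    using finite_V by (simp add: sum.If_cases Int_def)
  also have "{w\<in>V. (w \<in> A) \<noteq> (v \<in> A)} = (if v \<in> A then V - A else A)"
    using cut_subset by auto
  finally show ?thesis by simp
qed

lemma sum_opposite_size: "(\<Sum>v\<in>V. opposite_size v) = 2 * real (card A) * real (card (V - A))"
proof -
  have "(\<Sum>v\<in>V. opposite_size v)
      = real (card (V \<inter> A)) * real (card (V - A)) + real (card (V - A)) * real (card A)"
    using finite_V by (simp add: opposite_size_eq sum.If_cases Diff_eq)
  also have "V \<inter> A = A" using cut_subset by auto
  finally show ?thesis by simp
qed

lemma codegree_same_side_ge:
  assumes "crosses A u v = 0"
  shows "opposite_size v - cross_missing u - cross_missing v \<le> codegree u v"
proof -
  have same: "crosses A u w = crosses A v w" for w
    using assms by (auto simp: crosses_def split: if_splits)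
  then have "opposite_size u = opposite_size v" unfolding opposite_size_def by simp
  then have "opposite_size v - cross_missing u - cross_missing v
      = (\<Sum>w\<in>V. crosses A v w * (adj u w + adj v w - 1))"
    by (simp add: cross_missing_eq cross_degree_def opposite_size_def same algebra_simps
        sum.distrib sum_subtractf)
  also have "\<dots> \<le> codegree u v" unfolding codegree_def
  proof (intro sum_mono)
    fix w show "crosses A v w * (adj u w + adj v w - 1) \<le> adj u w * adj v w"
      using adj_cases[of u w] adj_cases[of v w] crosses_cases[of A v w] by (elim disjE) simp_all
  qed
  finally show ?thesis .
qed

lemma codegree_across_ge:
  assumes "crosses A v w = 1"
  shows "inner_degree v - cross_missing w \<le> codegree v w"
proof -
  have opp: "1 - crosses A v y = crosses A w y" for y
    using assms by (auto simp: crosses_def split: if_splits)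
  have "inner_degree v - cross_missing w = (\<Sum>y\<in>V. (1 - crosses A v y) * (adj v y + adj w y - 1))"
    by (simp add: inner_degree_def cross_missing_eq cross_degree_def opposite_size_def opp
        algebra_simps sum.distrib sum_subtractf)
  also have "\<dots> \<le> codegree v w" unfolding codegree_def
  proof (intro sum_mono)
    fix y show "(1 - crosses A v y) * (adj v y + adj w y - 1) \<le> adj v y * adj w y"
      using adj_cases[of v y] adj_cases[of w y] crosses_cases[of A v y] by (elim disjE) simp_all
  qed
  finally show ?thesis .
qed

end

locale near_bipartite_max_cut = max_cut +
  fixes \<eta> :: real
  assumes eta_pos: "0 < \<eta>" and eta_less: "\<eta> < 1/4"
    and near_complete: "real (card V) ^ 2 / 2 - \<eta>\<^sup>2 / 8 * real (card V) ^ 2 < cut_weight A"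
    and small_books: "\<And>u v. {u, v} \<in> E \<Longrightarrow> codegree u v < (1/4 - \<eta>) * real (card V)"
begin

abbreviation N :: real where "N \<equiv> real (card V)"

definition missing_total :: real where
  "missing_total = (\<Sum>v\<in>V. cross_missing v)"

definition heavy :: "'a \<Rightarrow> bool" where
  "heavy v \<longleftrightarrow> \<eta> / 2 * N < cross_missing v"

definition heavy_count :: real where
  "heavy_count = (\<Sum>v\<in>V. of_bool (heavy v))"

lemma card_V_pos: "0 < N"
proof (rule ccontr)
  assume "\<not> 0 < N"
  then have "V = {}" using finite_V by simp
  then have "cut_weight A = 0" unfolding cut_weight_def by simp
  then show False using near_complete \<open>V = {}\<close> by simp
qed

text \<open>Normal forms in which linarith treats \<open>\<eta> * N\<close> as a single atom.\<close>
lemma eta_N_arith: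
  "(1/4 - \<eta>) * N = N / 4 - \<eta> * N" "\<eta> / 2 * N = \<eta> * N / 2" "\<eta> / 4 * N = \<eta> * N / 4"
  "0 < \<eta> * N" "\<eta> * N < N / 4"
proof -
  show "(1/4 - \<eta>) * N = N / 4 - \<eta> * N" "\<eta> / 2 * N = \<eta> * N / 2" "\<eta> / 4 * N = \<eta> * N / 4"
    by (simp_all add: algebra_simps)
  show "0 < \<eta> * N" using eta_pos card_V_pos by simp
  show "\<eta> * N < N / 4" using eta_less card_V_pos by simp
qed

lemma missing_total_eq: "missing_total = 2 * real (card A) * real (card (V - A)) - cut_weight A"
  by (simp add: missing_total_def cross_missing_eq sum_subtractf sum_opposite_size sum_cross_degree)

lemma sides_product_le: "2 * real (card A) * real (card (V - A)) \<le> N\<^sup>2 / 2"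
proof -
  have "0 \<le> (real (card A) - real (card (V - A)))\<^sup>2" by simp
  then show ?thesis using card_sides[symmetric] by (simp add: power2_eq_square algebra_simps)
qed

lemma missing_total_less: "missing_total < \<eta>\<^sup>2 / 8 * N\<^sup>2"
  using missing_total_eq sides_product_le near_complete by simp

lemma missing_total_nonneg: "0 \<le> missing_total"
  unfolding missing_total_def by (intro sum_nonneg cross_missing_nonneg)

lemma opposite_size_greater: "N / 2 - \<eta> / 4 * N < opposite_size v"
proof -
  define a b where "a = real (card A)" and "b = real (card (V - A))"
  have ab: "a + b = N" using card_sides by (simp add: a_def b_def)
  have "N\<^sup>2 / 4 - \<eta>\<^sup>2 / 16 * N\<^sup>2 < a * b"
    using missing_total_eq missing_total_nonneg near_complete by (simp add: a_def b_def)
  moreover have "(a - N / 2)\<^sup>2 = N\<^sup>2 / 4 - a * b" "(\<eta> / 4 * N)\<^sup>2 = \<eta>\<^sup>2 / 16 * N\<^sup>2"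
    using ab[symmetric] by (simp_all add: power2_eq_square algebra_simps)
  ultimately have "\<bar>a - N / 2\<bar> < \<eta> / 4 * N"
    using power2_less_imp_less[of "\<bar>a - N / 2\<bar>" "\<eta> / 4 * N"] eta_pos card_V_pos by simp
  then have "N / 2 - \<eta> / 4 * N < a" "N / 2 - \<eta> / 4 * N < b"
    using ab unfolding abs_less_iff by linarith+
  then show ?thesis by (simp add: opposite_size_eq a_def b_def)
qed

lemma heavy_count_less: "heavy_count < \<eta> / 4 * N"
proof -
  have "heavy_count * (\<eta> / 2 * N) = (\<Sum>v\<in>V. of_bool (heavy v) * (\<eta> / 2 * N))"
    by (simp add: heavy_count_def sum_distrib_right)
  also have "\<dots> \<le> missing_total" unfolding missing_total_def
    by (intro sum_mono) (use cross_missing_nonneg in \<open>auto simp: heavy_def\<close>)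
  also have "\<dots> < (\<eta> / 4 * N) * (\<eta> / 2 * N)"
    using missing_total_less by (simp add: power2_eq_square mult_ac)
  finally show ?thesis using eta_pos card_V_pos by (simp add: mult_less_cancel_right)
qed

lemma inner_edge_has_heavy_end:
  assumes "crosses A u v = 0" "{u, v} \<in> E"
  shows "heavy u \<or> heavy v"
  using codegree_same_side_ge[OF assms(1)] small_books[OF assms(2)]
    opposite_size_greater[of v] eta_N_arith
  unfolding heavy_def by linarith

text \<open>Otherwise, as codegree v w \<ge> inner_degree v - cross_missing w, every cross neighbour w
  of v is heavy; since cross_degree v \<ge> inner_degree v, these alone miss more than
  missing_total cross edges.\<close>
lemma inner_degree_le:
  assumes "v \<in> V" shows "inner_degree v \<le> N / 4 - \<eta> * N / 2"
proof (rule ccontr)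
  assume big: "\<not> ?thesis"
  have "crosses A v w * adj v w * (\<eta> / 2 * N) \<le> crosses A v w * adj v w * cross_missing w" for w
  proof (cases "crosses A v w = 1 \<and> adj v w = 1")
    case True
    then have "\<eta> / 2 * N < cross_missing w"
      using codegree_across_ge[of v w] small_books[of v w] big eta_N_arith
      unfolding adj_eq_1_iff[symmetric] by linarith
    then show ?thesis using True by simp
  next
    case False
    then show ?thesis using adj_cases[of v w] crosses_cases[of A v w] by auto
  qed
  then have "cross_degree v * (\<eta> / 2 * N) \<le> (\<Sum>w\<in>V. crosses A v w * adj v w * cross_missing w)"
    unfolding cross_degree_def sum_distrib_right by (intro sum_mono)
  also have "\<dots> \<le> missing_total" unfolding missing_total_def
  proof (intro sum_mono)
    fix w show "crosses A v w * adj v w * cross_missing w \<le> cross_missing w"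
      using cross_missing_nonneg[of w] adj_cases[of v w] crosses_cases[of A v w] by (elim disjE) simp_all
  qed
  finally have "cross_degree v * (\<eta> / 2 * N) \<le> missing_total" .
  moreover have "(\<eta> / 2 * N) * (\<eta> / 2 * N) \<le> cross_degree v * (\<eta> / 2 * N)"
  proof (rule mult_right_mono)
    show "\<eta> / 2 * N \<le> cross_degree v"
      using big inner_degree_le_cross_degree[OF assms] eta_N_arith by linarith
  qed (use eta_N_arith in simp)
  moreover have "0 < \<eta>\<^sup>2 / 8 * N\<^sup>2" using eta_pos card_V_pos by simp
  ultimately show False using missing_total_less by (simp add: power2_eq_square)
qed

lemma heavy_inner_degree_le:
  assumes "v \<in> V" "heavy v"
  shows "inner_degree v + heavy_count \<le> cross_missing v"
proof (cases "\<exists>u\<in>V. crosses A v u = 0 \<and> adj v u = 1 \<and> \<not> heavy u")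
  case True
  then obtain u where u: "crosses A v u = 0" "{v, u} \<in> E" "\<not> heavy u" by (auto simp: adj_eq_1_iff)
  have "opposite_size v - cross_missing u - cross_missing v \<le> codegree v u"
    using codegree_same_side_ge[of u v] u(1) by (simp add: crosses_commute codegree_commute)
  then show ?thesis
    using small_books[OF u(2)] u(3) opposite_size_greater[of v] inner_degree_le[OF assms(1)]
      heavy_count_less eta_N_arith
    unfolding heavy_def by linarith
next
  case False
  have "inner_degree v \<le> heavy_count" unfolding inner_degree_def heavy_count_def
  proof (intro sum_mono)
    fix w assume "w \<in> V"
    then show "(1 - crosses A v w) * adj v w \<le> of_bool (heavy w)"
      using False adj_cases[of v w] crosses_cases[of A v w] by auto
  qed
  then show ?thesis using assms(2) heavy_count_less by (simp add: heavy_def)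
qed

text \<open>Each edge inside a side is charged to a heavy end.\<close>
lemma sum_inner_degree_le_heavy:
  "(\<Sum>v\<in>V. inner_degree v) \<le> 2 * (\<Sum>v\<in>V. of_bool (heavy v) * inner_degree v)"
proof -
  define h :: "'a \<Rightarrow> real" where "h v = of_bool (heavy v)" for v
  have charge: "(1 - crosses A v w) * adj v w \<le> (1 - crosses A v w) * adj v w * (h v + h w)"
    for v w
  proof (cases "crosses A v w = 0 \<and> adj v w = 1")
    case True
    then have "heavy v \<or> heavy w" using inner_edge_has_heavy_end by (simp add: adj_eq_1_iff)
    then show ?thesis using True by (auto simp: h_def)
  next
    case False
    then show ?thesis using adj_cases[of v w] crosses_cases[of A v w] by auto
  qed
  have "(\<Sum>v\<in>V. inner_degree v) \<le> (\<Sum>v\<in>V. \<Sum>w\<in>V. (1 - crosses A v w) * adj v w * (h v + h w))"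
    unfolding inner_degree_def by (intro sum_mono charge)
  also have "\<dots> = (\<Sum>v\<in>V. \<Sum>w\<in>V. (1 - crosses A v w) * adj v w * h v)
      + (\<Sum>v\<in>V. \<Sum>w\<in>V. (1 - crosses A v w) * adj v w * h w)"
    by (simp only: distrib_left sum.distrib)
  also have "(\<Sum>v\<in>V. \<Sum>w\<in>V. (1 - crosses A v w) * adj v w * h v) = (\<Sum>v\<in>V. h v * inner_degree v)"
    by (simp add: inner_degree_def sum_distrib_left mult.commute)
  also have "(\<Sum>v\<in>V. \<Sum>w\<in>V. (1 - crosses A v w) * adj v w * h w)
      = (\<Sum>w\<in>V. \<Sum>v\<in>V. (1 - crosses A v w) * adj v w * h w)"
    by (rule sum.swap)
  also have "\<dots> = (\<Sum>w\<in>V. h w * inner_degree w)"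
    by (simp add: inner_degree_def crosses_commute adj_commute sum_distrib_left mult.commute)
  finally show ?thesis by (simp add: h_def)
qed

text \<open>A missing cross edge between two heavy vertices is counted twice on the left and
  compensated once by the square.\<close>
lemma heavy_cross_missing_le:
  "2 * (\<Sum>v\<in>V. of_bool (heavy v) * cross_missing v) - heavy_count * heavy_count \<le> missing_total"
proof -
  define h :: "'a \<Rightarrow> real" where "h v = of_bool (heavy v)" for v
  define m where "m v w = crosses A v w * (1 - adj v w)" for v w
  have pair: "m v w * (h v + h w) - h v * h w \<le> crosses A v w * (1 - adj v w)" for v w
    using adj_cases[of v w] crosses_cases[of A v w] by (cases "heavy v"; cases "heavy w") (auto simp: h_def m_def)
  have rows: "(\<Sum>v\<in>V. \<Sum>w\<in>V. m v w * h v) = (\<Sum>v\<in>V. h v * cross_missing v)"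
    by (simp add: m_def cross_missing_def sum_distrib_left mult.commute)
  have "(\<Sum>v\<in>V. \<Sum>w\<in>V. m v w * h w) = (\<Sum>w\<in>V. \<Sum>v\<in>V. m v w * h w)"
    by (rule sum.swap)
  also have "\<dots> = (\<Sum>w\<in>V. h w * cross_missing w)"
    by (simp add: m_def cross_missing_def crosses_commute adj_commute sum_distrib_left mult.commute)
  finally have columns: "(\<Sum>v\<in>V. \<Sum>w\<in>V. m v w * h w) = (\<Sum>v\<in>V. h v * cross_missing v)" .
  have square: "heavy_count * heavy_count = (\<Sum>v\<in>V. \<Sum>w\<in>V. h v * h w)"
    by (simp add: heavy_count_def h_def sum_product)
  have "(\<Sum>v\<in>V. \<Sum>w\<in>V. m v w * (h v + h w) - h v * h w)
      = (\<Sum>v\<in>V. \<Sum>w\<in>V. m v w * h v) + (\<Sum>v\<in>V. \<Sum>w\<in>V. m v w * h w)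
        - (\<Sum>v\<in>V. \<Sum>w\<in>V. h v * h w)"
    by (simp only: distrib_left sum.distrib sum_subtractf)
  moreover have "(\<Sum>v\<in>V. \<Sum>w\<in>V. m v w * (h v + h w) - h v * h w) \<le> missing_total"
    unfolding missing_total_def cross_missing_def by (intro sum_mono pair)
  ultimately show ?thesis unfolding rows columns square[symmetric] by (simp add: h_def)
qed

lemma sum_inner_degree_le_missing_total: "(\<Sum>v\<in>V. inner_degree v) \<le> missing_total"
proof -
  have "(\<Sum>v\<in>V. of_bool (heavy v) * inner_degree v)
      \<le> (\<Sum>v\<in>V. of_bool (heavy v) * (cross_missing v - heavy_count))"
    using heavy_inner_degree_le by (intro sum_mono) (auto simp: algebra_simps)
  also have "\<dots> = (\<Sum>v\<in>V. of_bool (heavy v) * cross_missing v) - heavy_count * heavy_count"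
    unfolding right_diff_distrib sum_subtractf heavy_count_def sum_distrib_right ..
  finally have "(\<Sum>v\<in>V. of_bool (heavy v) * inner_degree v)
      \<le> (\<Sum>v\<in>V. of_bool (heavy v) * cross_missing v) - heavy_count * heavy_count" .
  then show ?thesis
    using sum_inner_degree_le_heavy heavy_cross_missing_le
      zero_le_square[of heavy_count] by linarith
qed

lemma degree_sum_le: "(\<Sum>v\<in>V. degree v) \<le> N\<^sup>2 / 2"
  using sum_inner_degree_le_missing_total sum_inner_degree missing_total_eq sides_product_le
  by simp

end

theorem theorem2:
  fixes \<alpha> :: real
  assumes "1/3 < \<alpha>" and "\<alpha> < 1/2"
  shows "\<exists>\<beta>>0. \<exists>N::nat. \<forall>n\<ge>N. \<forall>(V::nat set) (E::nat set set).
           simple_graph V E \<and> card V = n \<and> card E \<ge> n^2 div 4 + 1 \<and>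
           real (max_book V E) < \<alpha> * real n / 2
           \<longrightarrow> real (card (triangles V E)) \<ge> \<beta> * real n ^ 3"
proof -
  define \<eta> where "\<eta> = 1/4 - \<alpha> / 2"
  have \<eta>: "0 < \<eta>" "\<eta> < 1/4" using assms by (auto simp: \<eta>_def)
  show ?thesis
  proof (intro exI[of _ "\<eta>\<^sup>2 / 432"] conjI exI[of _ "1::nat"] allI impI)
    show "0 < \<eta>\<^sup>2 / 432" using \<eta> by simp
    fix n :: nat and V :: "nat set" and E :: "nat set set"
    assume "1 \<le> n" and "simple_graph V E \<and> card V = n \<and> card E \<ge> n^2 div 4 + 1 \<and>
      real (max_book V E) < \<alpha> * real n / 2"
    then have n: "0 < n" "card V = n" and G: "simple_graph V E"
      and many_edges: "n^2 div 4 + 1 \<le> card E" and books: "real (max_book V E) < \<alpha> * real n / 2"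
      by auto
    interpret finite_graph V E by (rule finite_graph.intro[OF G])
    show "\<eta>\<^sup>2 / 432 * real n ^ 3 \<le> real (card (triangles V E))"
    proof (rule ccontr)
      assume "\<not> ?thesis"
      then have few_triangles: "ordered_triangles < \<eta>\<^sup>2 / 16 * real n ^ 3"
        using ordered_triangles_le by simp
      have "real (n^2) < 4 * real (card E)" using many_edges by linarith
      then have dense: "real n ^ 2 / 2 < (\<Sum>u\<in>V. degree u)"
        using twice_card_edges_le_degree_sum by simp
      then obtain A where A: "A \<subseteq> V" "\<forall>A'\<subseteq>V. cut_weight A' \<le> cut_weight A"
          "real n ^ 2 / 2 - 2 * (\<eta>\<^sup>2 / 16) * real n ^ 2 < cut_weight A"
        using ex_large_max_cut[OF n(2,1) less_imp_le[OF dense] few_triangles] by blast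
      have "codegree u v < (1/4 - \<eta>) * real n" if "{u, v} \<in> E" for u v
        using codegree_le_max_book[OF that] books by (simp add: \<eta>_def)
      then interpret near_bipartite_max_cut V E A \<eta>
        using A \<eta> n(2) by unfold_locales simp_all
      show False using degree_sum_le dense n(2) by simp
    qed
  qed
qed

end
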